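(* Let $1<p<\infty$ and let $\mathcal{U}$ be a nonprincipal ultrafilter on $\mathbb{N}$. For every $(f_n)_{n,\mathcal{U}}\in(L^{p})^{\mathcal{U}}$ the norm limit $\lim_{r\to\infty}(f_nI(|f_n|>r))_{n,\mathcal{U}}$ exists in $(L^{p})^{\mathcal{U}}$ and depends only on the class $(f_n)_{n,\mathcal{U}}$, and the map $R:(L^{p})^{\mathcal{U}}\to(L^{p})^{\mathcal{U}}$, $R[(f_n)_{n,\mathcal{U}}]=\lim_{r\to\infty}(f_nI(|f_n|>r))_{n,\mathcal{U}}$, is a bounded linear idempotent (projection).
   Context: $L^{p}=L^{p}([0,1],\mu)$, $\mu$ Lebesgue measure, real scalars. $(L^{p})^{\mathcal{U}}$ is the ultrapower of $L^p$ (bounded sequences modulo those with $\lim_{n,\mathcal{U}}\|f_n\|_p=0$), $(f_n)_{n,\mathcal{U}}$ the class of $(f_n)$. $I(|f|>r)$ denotes the indicator function of $\{t:|f(t)|>r\}$. *)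

theory Defs
  imports "HOL-Analysis.Analysis"
begin

definition nonprincipal_ultrafilter :: "nat filter \<Rightarrow> bool" where
  "nonprincipal_ultrafilter U \<longleftrightarrow>
     U \<noteq> bot \<and>
     (\<forall>P. eventually P U \<or> eventually (\<lambda>n. \<not> P n) U) \<and>
     (\<forall>m. eventually (\<lambda>n. n \<noteq> m) U)"

abbreviation I01 :: "real measure" where
  "I01 \<equiv> lebesgue_on {0..1}"

definition memLp :: "real \<Rightarrow> (real \<Rightarrow> real) \<Rightarrow> bool" where
  "memLp p f \<longleftrightarrow> f \<in> borel_measurable I01 \<and> integrable I01 (\<lambda>x. \<bar>f x\<bar> powr p)"

definition Lp_norm :: "real \<Rightarrow> (real \<Rightarrow> real) \<Rightarrow> real" where
  "Lp_norm p f = (integral\<^sup>L I01 (\<lambda>x. \<bar>f x\<bar> powr p)) powr (1 / p)"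

text \<open>Representatives of elements of the ultrapower: norm-bounded sequences in L^p.\<close>
definition Lp_bseq :: "real \<Rightarrow> (nat \<Rightarrow> real \<Rightarrow> real) \<Rightarrow> bool" where
  "Lp_bseq p f \<longleftrightarrow> (\<forall>n. memLp p (f n)) \<and> bdd_above (range (\<lambda>n. Lp_norm p (f n)))"

definition up_norm :: "real \<Rightarrow> nat filter \<Rightarrow> (nat \<Rightarrow> real \<Rightarrow> real) \<Rightarrow> real" where
  "up_norm p U f = Lim U (\<lambda>n. Lp_norm p (f n))"

definition up_eq :: "real \<Rightarrow> nat filter \<Rightarrow> (nat \<Rightarrow> real \<Rightarrow> real) \<Rightarrow> (nat \<Rightarrow> real \<Rightarrow> real) \<Rightarrow> bool" where
  "up_eq p U f g \<longleftrightarrow> up_norm p U (\<lambda>n x. f n x - g n x) = 0"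

definition trunc_above :: "real \<Rightarrow> (real \<Rightarrow> real) \<Rightarrow> real \<Rightarrow> real" where
  "trunc_above r f = (\<lambda>x. if \<bar>f x\<bar> > r then f x else 0)"

end

theory Submission
  imports Defs
begin

text \<open>Choose truncation levels diagonally along \<open>U\<close>: \<open>k\<^sub>n\<close> is the largest \<open>k \<le> n\<close> for which
  \<open>\<integral>|f\<^sub>n I(|f\<^sub>n| > k)|\<^sup>p\<close> is still close to \<open>inf\<^sub>s lim\<^sub>n\<^sub>,\<^sub>U \<integral>|f\<^sub>n I(|f\<^sub>n| > s)|\<^sup>p\<close>.
  Then \<open>f\<^sub>n\<close> carries almost no \<open>p\<close>-mass on \<open>{r < |f\<^sub>n| \<le> k\<^sub>n}\<close> once \<open>r\<close> is large. This gives
  \<open>f\<^sub>n I(|f\<^sub>n| > r) \<rightarrow> R f\<close> for \<open>R f\<^sub>n = f\<^sub>n I(|f\<^sub>n| > k\<^sub>n)\<close>, and splits \<open>f\<^sub>n\<close> into a singular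
  part \<open>R f\<^sub>n\<close>, supported along \<open>U\<close> on sets of vanishing measure, and a regular part
  \<open>f\<^sub>n - R f\<^sub>n\<close>, equi-integrable along \<open>U\<close>. A sequence with both properties is null in the
  ultrapower. Independence of the representative, linearity and idempotence of \<open>R\<close> follow: in
  each case the difference of the two sides is a difference of singular parts and also a
  combination of regular parts and null sequences.\<close>

section \<open>Limits along a nonprincipal ultrafilter\<close>

lemma nonprincipal_ultrafilter_neq_bot: "nonprincipal_ultrafilter U \<Longrightarrow> U \<noteq> bot"
  unfolding nonprincipal_ultrafilter_def by auto

lemma nonprincipal_ultrafilter_eventually_ge:
  assumes "nonprincipal_ultrafilter U"
  shows "eventually (\<lambda>n. K \<le> n) U"
proof -
  have "\<forall>m\<in>{..<K}. eventually (\<lambda>n. n \<noteq> m) U"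
    using assms unfolding nonprincipal_ultrafilter_def by auto
  then have "eventually (\<lambda>n. \<forall>m\<in>{..<K}. n \<noteq> m) U"
    by (rule eventually_ball_finite[rotated]) simp
  then show ?thesis by eventually_elim auto
qed

lemma nonprincipal_ultrafilter_tendsto_Lim:
  fixes s :: "nat \<Rightarrow> real"
  assumes U: "nonprincipal_ultrafilter U" and bounded: "\<And>n. \<bar>s n\<bar> \<le> B"
  shows "(s \<longlongrightarrow> Lim U s) U"
proof -
  let ?F = "filtermap s U"
  have "?F \<noteq> bot"
    using nonprincipal_ultrafilter_neq_bot[OF U] by (simp add: filtermap_bot_iff)
  moreover have "eventually (\<lambda>x. x \<in> {-B..B}) ?F"
    using bounded by (auto simp: eventually_filtermap abs_le_iff intro!: always_eventually)
      (metis minus_le_iff)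
  ultimately obtain l where cluster: "inf (nhds l) ?F \<noteq> bot"
    using compact_filter[THEN iffD1, OF compact_Icc] by blast
  have "(s \<longlongrightarrow> l) U"
    unfolding tendsto_def
  proof (intro allI impI)
    fix S :: "real set" assume "open S" "l \<in> S"
    show "eventually (\<lambda>n. s n \<in> S) U"
    proof (rule ccontr)
      assume "\<not> eventually (\<lambda>n. s n \<in> S) U"
      then have "eventually (\<lambda>x. x \<notin> S) ?F"
        using U unfolding nonprincipal_ultrafilter_def eventually_filtermap by blast
      moreover have "eventually (\<lambda>x. x \<in> S) (nhds l)"
        using \<open>open S\<close> \<open>l \<in> S\<close> eventually_nhds by blast
      ultimately have "eventually (\<lambda>_. False) (inf (nhds l) ?F)"
        unfolding eventually_inf by blast
      then show False using cluster by (simp add: eventually_False)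
    qed
  qed
  then show ?thesis using nonprincipal_ultrafilter_neq_bot[OF U] by (simp add: tendsto_Lim)
qed

section \<open>Integrals of \<open>p\<close>-th powers on \<open>[0,1]\<close>\<close>

definition Lp_integral :: "real \<Rightarrow> (real \<Rightarrow> real) \<Rightarrow> real" where
  "Lp_integral p f = integral\<^sup>L I01 (\<lambda>x. \<bar>f x\<bar> powr p)"

definition Lp_integral_on :: "real set \<Rightarrow> real \<Rightarrow> (real \<Rightarrow> real) \<Rightarrow> real" where
  "Lp_integral_on A p f = integral\<^sup>L I01 (\<lambda>x. indicator A x * \<bar>f x\<bar> powr p)"

lemma Lp_integral_nonneg: "0 \<le> Lp_integral p f"
  unfolding Lp_integral_def by (rule integral_nonneg_AE) auto

lemma Lp_norm_eq_Lp_integral_powr: "Lp_norm p f = Lp_integral p f powr (1/p)"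
  unfolding Lp_norm_def Lp_integral_def ..

lemma Lp_norm_nonneg: "0 \<le> Lp_norm p f"
  unfolding Lp_norm_def by simp

lemma Lp_integral_eq_Lp_norm_powr: "0 < p \<Longrightarrow> Lp_integral p f = Lp_norm p f powr p"
  unfolding Lp_norm_eq_Lp_integral_powr using Lp_integral_nonneg[of p f] by (simp add: powr_powr)

lemma Lp_norm_le_iff:
  assumes "0 < p" "0 \<le> a"
  shows "Lp_norm p f \<le> a \<longleftrightarrow> Lp_integral p f \<le> a powr p"
proof
  assume "Lp_norm p f \<le> a"
  then show "Lp_integral p f \<le> a powr p"
    using assms by (simp add: Lp_integral_eq_Lp_norm_powr powr_mono2 Lp_norm_nonneg)
next
  assume "Lp_integral p f \<le> a powr p"
  then have "Lp_integral p f powr (1/p) \<le> (a powr p) powr (1/p)"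
    using assms by (intro powr_mono2) (auto simp: Lp_integral_nonneg)
  then show "Lp_norm p f \<le> a"
    using assms by (simp add: Lp_norm_eq_Lp_integral_powr powr_powr)
qed

lemma Lp_norm_less_iff:
  assumes "0 < p" "0 \<le> a"
  shows "Lp_norm p f < a \<longleftrightarrow> Lp_integral p f < a powr p"
proof -
  have "Lp_norm p f \<ge> a \<longleftrightarrow> Lp_integral p f \<ge> a powr p"
  proof
    assume "a \<le> Lp_norm p f"
    then show "a powr p \<le> Lp_integral p f"
      using assms by (simp add: Lp_integral_eq_Lp_norm_powr powr_mono2)
  next
    assume "a powr p \<le> Lp_integral p f"
    then have "(a powr p) powr (1/p) \<le> Lp_integral p f powr (1/p)"
      using assms by (intro powr_mono2) auto
    then show "a \<le> Lp_norm p f"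
      using assms by (simp add: Lp_norm_eq_Lp_integral_powr powr_powr)
  qed
  then show ?thesis by linarith
qed

lemma abs_add_powr_le:
  fixes x y p :: real
  assumes "0 < p"
  shows "\<bar>x + y\<bar> powr p \<le> 2 powr p * (\<bar>x\<bar> powr p + \<bar>y\<bar> powr p)"
proof -
  let ?m = "max \<bar>x\<bar> \<bar>y\<bar>"
  have "\<bar>x + y\<bar> powr p \<le> (2 * ?m) powr p"
    by (rule powr_mono2) (use assms in auto)
  also have "\<dots> = 2 powr p * ?m powr p" by (simp add: powr_mult)
  also have "?m powr p \<le> \<bar>x\<bar> powr p + \<bar>y\<bar> powr p"
    by (auto simp: max_def)
  finally show ?thesis by simp
qed

lemma abs_lincomb_powr_le:
  fixes a b x y p :: real
  assumes "0 < p"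
  shows "\<bar>a * x + b * y\<bar> powr p \<le> 2 powr p * (\<bar>a\<bar> powr p * \<bar>x\<bar> powr p + \<bar>b\<bar> powr p * \<bar>y\<bar> powr p)"
  using abs_add_powr_le[OF assms, of "a * x" "b * y"] by (simp add: abs_mult powr_mult)

lemma integrable_indicator_I01: "A \<in> sets I01 \<Longrightarrow> integrable I01 (indicator A :: real \<Rightarrow> real)"
  using finite_measure.emeasure_finite[OF finite_measure_lebesgue_on[of "{0..1::real}"], of A]
  by (simp add: top.not_eq_extremum)

lemma integrable_Lp_integral_on:
  "memLp p f \<Longrightarrow> A \<in> sets I01 \<Longrightarrow> integrable I01 (\<lambda>x. indicator A x * \<bar>f x\<bar> powr p)"
  unfolding memLp_def using integrable_real_mult_indicator[of A I01 "\<lambda>x. \<bar>f x\<bar> powr p"]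
  by (simp add: mult.commute)

lemma memLp_lincomb:
  assumes p: "0 < p" and f: "memLp p f" and g: "memLp p g"
  shows "memLp p (\<lambda>x. a * f x + b * g x)"
proof -
  have [measurable]: "f \<in> borel_measurable I01" "g \<in> borel_measurable I01"
    using f g unfolding memLp_def by auto
  have "integrable I01 (\<lambda>x. 2 powr p * (\<bar>a\<bar> powr p * \<bar>f x\<bar> powr p + \<bar>b\<bar> powr p * \<bar>g x\<bar> powr p))"
    using f g unfolding memLp_def by auto
  then have "integrable I01 (\<lambda>x. \<bar>a * f x + b * g x\<bar> powr p)"
    by (rule Bochner_Integration.integrable_bound)
      (auto intro!: always_eventually abs_lincomb_powr_le[OF p] simp: abs_of_nonneg)
  then show ?thesis unfolding memLp_def by auto
qed

lemma memLp_diff: "0 < p \<Longrightarrow> memLp p f \<Longrightarrow> memLp p g \<Longrightarrow> memLp p (\<lambda>x. f x - g x)"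
  using memLp_lincomb[of p f g 1 "-1"] by simp

lemma Lp_integral_on_lincomb_le:
  assumes p: "0 < p" and f: "memLp p f" and g: "memLp p g" and A: "A \<in> sets I01"
  shows "Lp_integral_on A p (\<lambda>x. a * f x + b * g x)
    \<le> 2 powr p * (\<bar>a\<bar> powr p * Lp_integral_on A p f + \<bar>b\<bar> powr p * Lp_integral_on A p g)"
proof -
  have "Lp_integral_on A p (\<lambda>x. a * f x + b * g x) \<le> integral\<^sup>L I01 (\<lambda>x. 2 powr p *
      (\<bar>a\<bar> powr p * (indicator A x * \<bar>f x\<bar> powr p) + \<bar>b\<bar> powr p * (indicator A x * \<bar>g x\<bar> powr p)))"
    unfolding Lp_integral_on_def
  proof (rule integral_mono)
    fix x
    show "indicator A x * \<bar>a * f x + b * g x\<bar> powr p \<le> 2 powr p *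
      (\<bar>a\<bar> powr p * (indicator A x * \<bar>f x\<bar> powr p) + \<bar>b\<bar> powr p * (indicator A x * \<bar>g x\<bar> powr p))"
      using abs_lincomb_powr_le[OF p, of a "f x" b "g x"] by (cases "x \<in> A") auto
  qed (use integrable_Lp_integral_on[OF _ A] memLp_lincomb[OF p f g] f g in auto)
  also have "\<dots> = 2 powr p * (\<bar>a\<bar> powr p * Lp_integral_on A p f + \<bar>b\<bar> powr p * Lp_integral_on A p g)"
    unfolding Lp_integral_on_def using integrable_Lp_integral_on[OF _ A] f g by simp
  finally show ?thesis .
qed

lemma Lp_integral_on_space: "Lp_integral_on (space I01) p f = Lp_integral p f"
  unfolding Lp_integral_on_def Lp_integral_def by (rule Bochner_Integration.integral_cong) auto

lemma Lp_integral_on_le: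
  assumes "memLp p f" "A \<in> sets I01"
  shows "Lp_integral_on A p f \<le> Lp_integral p f"
  unfolding Lp_integral_on_def Lp_integral_def
  by (rule integral_mono) (use assms integrable_Lp_integral_on in \<open>auto simp: memLp_def indicator_def\<close>)

lemma Lp_integral_on_eq:
  assumes "\<And>x. x \<in> space I01 \<Longrightarrow> x \<notin> A \<Longrightarrow> f x = 0"
  shows "Lp_integral_on A p f = Lp_integral p f"
  unfolding Lp_integral_on_def Lp_integral_def
  by (rule Bochner_Integration.integral_cong) (use assms in \<open>auto simp: indicator_def\<close>)

lemma Lp_integral_lincomb_le:
  assumes "0 < p" "memLp p f" "memLp p g"
  shows "Lp_integral p (\<lambda>x. a * f x + b * g x)
    \<le> 2 powr p * (\<bar>a\<bar> powr p * Lp_integral p f + \<bar>b\<bar> powr p * Lp_integral p g)"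
  using Lp_integral_on_lincomb_le[OF assms sets.top, of a b] unfolding Lp_integral_on_space .

lemma
  assumes f: "memLp p f" and h: "h \<in> borel_measurable I01" and p: "0 < p"
    and dominated: "\<And>x. x \<in> space I01 \<Longrightarrow> \<bar>h x\<bar> \<le> \<bar>f x\<bar>"
  shows memLp_dominated: "memLp p h"
    and Lp_integral_dominated: "Lp_integral p h \<le> Lp_integral p f"
proof -
  have "integrable I01 (\<lambda>x. \<bar>h x\<bar> powr p)"
  proof (rule Bochner_Integration.integrable_bound)
    show "integrable I01 (\<lambda>x. \<bar>f x\<bar> powr p)" using f unfolding memLp_def by auto
  qed (use h dominated p in \<open>auto intro!: AE_I2 powr_mono2\<close>)
  then show "memLp p h" using h unfolding memLp_def by auto
  then show "Lp_integral p h \<le> Lp_integral p f" unfolding Lp_integral_def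
    by (intro integral_mono) (use f dominated p in \<open>auto simp: memLp_def intro!: powr_mono2\<close>)
qed

lemma measurable_trunc_above[measurable]:
  assumes [measurable]: "f \<in> borel_measurable I01"
  shows "trunc_above r f \<in> borel_measurable I01"
  unfolding trunc_above_def by measurable

lemma
  assumes "memLp p f" "0 < p"
  shows memLp_trunc_above: "memLp p (trunc_above r f)"
    and Lp_integral_trunc_above_le: "Lp_integral p (trunc_above r f) \<le> Lp_integral p f"
  using memLp_dominated[OF assms(1) _ assms(2)] Lp_integral_dominated[OF assms(1) _ assms(2)] assms(1)
  by (auto simp: memLp_def trunc_above_def)

lemma Lp_integral_trunc_above_diff:
  assumes f: "memLp p f" and p: "0 < p" and "r \<le> t"
  shows "Lp_integral p (\<lambda>x. trunc_above r f x - trunc_above t f x)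
    = Lp_integral p (trunc_above r f) - Lp_integral p (trunc_above t f)"
proof -
  have "\<bar>trunc_above r f x - trunc_above t f x\<bar> powr p
      = \<bar>trunc_above r f x\<bar> powr p - \<bar>trunc_above t f x\<bar> powr p" for x
    using \<open>r \<le> t\<close> by (auto simp: trunc_above_def)
  then show ?thesis
    unfolding Lp_integral_def
    using memLp_trunc_above[OF f p] by (simp add: memLp_def Bochner_Integration.integral_diff)
qed

lemma
  assumes f: "memLp p f" and t: "0 < t" and p: "0 < p"
  shows sets_level_set: "{x\<in>space I01. t < \<bar>f x\<bar>} \<in> sets I01"
    and measure_level_set_le: "measure I01 {x\<in>space I01. t < \<bar>f x\<bar>} \<le> Lp_integral p f / t powr p"
proof -
  have [measurable]: "f \<in> borel_measurable I01" using f unfolding memLp_def by auto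
  show S: "{x\<in>space I01. t < \<bar>f x\<bar>} \<in> sets I01" by measurable
  let ?S = "{x\<in>space I01. t < \<bar>f x\<bar>}"
  have "?S \<inter> space I01 = ?S" by auto
  then have "t powr p * measure I01 ?S = integral\<^sup>L I01 (\<lambda>x. t powr p * indicator ?S x)"
    by simp
  also have "\<dots> \<le> Lp_integral p f"
    unfolding Lp_integral_def
  proof (rule integral_mono)
    show "integrable I01 (\<lambda>x. t powr p * indicator ?S x)"
      using integrable_indicator_I01[OF S] by simp
  qed (use f t p in \<open>auto simp: memLp_def indicator_def intro!: powr_mono2\<close>)
  finally show "measure I01 ?S \<le> Lp_integral p f / t powr p"
    using t by (simp add: field_simps)
qed

section \<open>Bounded sequences and the ultrapower norm\<close>

lemma Lp_bseqD_memLp: "Lp_bseq p f \<Longrightarrow> memLp p (f n)"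
  unfolding Lp_bseq_def by auto

lemma Lp_bseq_iff_Lp_integral:
  assumes p: "0 < p"
  shows "Lp_bseq p f \<longleftrightarrow> (\<forall>n. memLp p (f n)) \<and> bdd_above (range (\<lambda>n. Lp_integral p (f n)))"
proof -
  have "bdd_above (range (\<lambda>n. Lp_norm p (f n))) \<longleftrightarrow> bdd_above (range (\<lambda>n. Lp_integral p (f n)))"
  proof
    assume "bdd_above (range (\<lambda>n. Lp_norm p (f n)))"
    then obtain B where B: "\<And>n. Lp_norm p (f n) \<le> B" by (auto simp: bdd_above_def)
    then have "0 \<le> B" using Lp_norm_nonneg order_trans by blast
    then have "Lp_integral p (f n) \<le> B powr p" for n using B Lp_norm_le_iff[OF p] by blast
    then show "bdd_above (range (\<lambda>n. Lp_integral p (f n)))" by (intro bdd_aboveI2)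
  next
    assume "bdd_above (range (\<lambda>n. Lp_integral p (f n)))"
    then obtain B where "\<And>n. Lp_integral p (f n) \<le> B" by (auto simp: bdd_above_def)
    then have "Lp_norm p (f n) \<le> max B 0 powr (1/p)" for n
      unfolding Lp_norm_eq_Lp_integral_powr
      by (intro powr_mono2) (use p Lp_integral_nonneg in \<open>auto intro: le_max_iff_disj[THEN iffD2]\<close>)
    then show "bdd_above (range (\<lambda>n. Lp_norm p (f n)))" by (intro bdd_aboveI2)
  qed
  then show ?thesis unfolding Lp_bseq_def by simp
qed

lemma Lp_bseq_Lp_integral_bound:
  assumes "0 < p" "Lp_bseq p f"
  obtains M where "\<And>n. Lp_integral p (f n) \<le> M"
  using assms by (auto simp: Lp_bseq_iff_Lp_integral bdd_above_def)

lemma Lp_bseq_dominated: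
  assumes p: "0 < p" and f: "Lp_bseq p f" and g: "\<And>n. memLp p (g n)"
    and le: "\<And>n. Lp_integral p (g n) \<le> Lp_integral p (f n)"
  shows "Lp_bseq p g"
proof -
  obtain M where "\<And>n. Lp_integral p (f n) \<le> M" using Lp_bseq_Lp_integral_bound[OF p f] by blast
  then have "\<And>n. Lp_integral p (g n) \<le> M" using le order_trans by blast
  then show ?thesis using g by (auto simp: Lp_bseq_iff_Lp_integral[OF p] intro!: bdd_aboveI2)
qed

lemma Lp_bseq_lincomb:
  assumes p: "0 < p" and f: "Lp_bseq p f" and g: "Lp_bseq p g"
  shows "Lp_bseq p (\<lambda>n x. a * f n x + b * g n x)"
proof -
  obtain M1 where M1: "\<And>n. Lp_integral p (f n) \<le> M1" using Lp_bseq_Lp_integral_bound[OF p f] by blast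
  obtain M2 where M2: "\<And>n. Lp_integral p (g n) \<le> M2" using Lp_bseq_Lp_integral_bound[OF p g] by blast
  have "Lp_integral p (\<lambda>x. a * f n x + b * g n x) \<le> 2 powr p * (\<bar>a\<bar> powr p * M1 + \<bar>b\<bar> powr p * M2)" for n
    using Lp_integral_lincomb_le[OF p Lp_bseqD_memLp[OF f] Lp_bseqD_memLp[OF g], of a n b n] M1[of n] M2[of n]
    by (smt (verit, best) mult_left_mono powr_ge_zero)
  moreover have "memLp p (\<lambda>x. a * f n x + b * g n x)" for n
    using memLp_lincomb[OF p Lp_bseqD_memLp[OF f] Lp_bseqD_memLp[OF g]] .
  ultimately show ?thesis by (auto simp: Lp_bseq_iff_Lp_integral[OF p] intro!: bdd_aboveI2)
qed

lemma Lp_bseq_diff: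
  "0 < p \<Longrightarrow> Lp_bseq p f \<Longrightarrow> Lp_bseq p g \<Longrightarrow> Lp_bseq p (\<lambda>n x. f n x - g n x)"
  using Lp_bseq_lincomb[of p f g 1 "-1"] by simp

lemma up_norm_tendsto:
  assumes U: "nonprincipal_ultrafilter U" and f: "Lp_bseq p f"
  shows "((\<lambda>n. Lp_norm p (f n)) \<longlongrightarrow> up_norm p U f) U"
proof -
  obtain B where "\<And>n. Lp_norm p (f n) \<le> B" using f unfolding Lp_bseq_def bdd_above_def by auto
  then have "\<bar>Lp_norm p (f n)\<bar> \<le> B" for n by (simp add: Lp_norm_nonneg)
  then show ?thesis unfolding up_norm_def by (rule nonprincipal_ultrafilter_tendsto_Lim[OF U])
qed

lemma up_norm_nonneg:
  "nonprincipal_ultrafilter U \<Longrightarrow> Lp_bseq p f \<Longrightarrow> 0 \<le> up_norm p U f"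
  by (rule tendsto_lowerbound[OF up_norm_tendsto _ nonprincipal_ultrafilter_neq_bot])
    (auto simp: Lp_norm_nonneg)

lemma up_norm_le:
  "nonprincipal_ultrafilter U \<Longrightarrow> Lp_bseq p f \<Longrightarrow> eventually (\<lambda>n. Lp_norm p (f n) \<le> c) U
    \<Longrightarrow> up_norm p U f \<le> c"
  by (rule tendsto_upperbound[OF up_norm_tendsto _ nonprincipal_ultrafilter_neq_bot])

lemma up_norm_mono:
  assumes U: "nonprincipal_ultrafilter U" and "Lp_bseq p f" "Lp_bseq p g"
    and "\<And>n. Lp_norm p (f n) \<le> Lp_norm p (g n)"
  shows "up_norm p U f \<le> up_norm p U g"
  using assms by (intro tendsto_le[OF nonprincipal_ultrafilter_neq_bot[OF U] up_norm_tendsto up_norm_tendsto]) auto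

lemma up_norm_eq_0I:
  assumes U: "nonprincipal_ultrafilter U" and p: "0 < p"
    and null: "\<And>e. 0 < e \<Longrightarrow> eventually (\<lambda>n. Lp_integral p (h n) < e) U"
  shows "up_norm p U h = 0"
proof -
  have "((\<lambda>n. Lp_norm p (h n)) \<longlongrightarrow> 0) U"
  proof (rule order_tendstoI)
    fix a :: real assume "0 < a"
    then show "eventually (\<lambda>n. Lp_norm p (h n) < a) U"
      using null[of "a powr p"] Lp_norm_less_iff[OF p] by simp
  qed (auto intro: always_eventually less_le_trans[OF _ Lp_norm_nonneg])
  then show ?thesis
    unfolding up_norm_def using nonprincipal_ultrafilter_neq_bot[OF U] by (simp add: tendsto_Lim)
qed

lemma up_eq_eventually_Lp_integral_less:
  assumes U: "nonprincipal_ultrafilter U" and p: "0 < p" and "Lp_bseq p f" "Lp_bseq p g"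
    and "up_eq p U f g" and e: "0 < e"
  shows "eventually (\<lambda>n. Lp_integral p (\<lambda>x. f n x - g n x) < e) U"
proof -
  have "((\<lambda>n. Lp_norm p (\<lambda>x. f n x - g n x)) \<longlongrightarrow> 0) U"
    using up_norm_tendsto[OF U Lp_bseq_diff[OF p assms(3,4)]] assms(5) unfolding up_eq_def by simp
  then have "eventually (\<lambda>n. Lp_norm p (\<lambda>x. f n x - g n x) < e powr (1/p)) U"
    using e by (intro order_tendstoD) auto
  then show ?thesis
    using Lp_norm_less_iff[OF p, of "e powr (1/p)"] p e by (simp add: powr_powr)
qed

section \<open>Equi-integrability and vanishing support along an ultrafilter\<close>

definition equiintegrable_along :: "real \<Rightarrow> nat filter \<Rightarrow> (nat \<Rightarrow> real \<Rightarrow> real) \<Rightarrow> bool" where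
  "equiintegrable_along p U h \<longleftrightarrow> (\<forall>n. memLp p (h n)) \<and>
     (\<forall>e>0. \<exists>d>0. \<forall>\<^sub>F n in U. \<forall>A\<in>sets I01. measure I01 A < d \<longrightarrow> Lp_integral_on A p (h n) < e)"

definition vanishing_support_along :: "nat filter \<Rightarrow> (nat \<Rightarrow> real \<Rightarrow> real) \<Rightarrow> bool" where
  "vanishing_support_along U h \<longleftrightarrow> (\<forall>d>0. \<forall>\<^sub>F n in U. \<exists>A\<in>sets I01. measure I01 A < d \<and>
     (\<forall>x\<in>space I01. x \<notin> A \<longrightarrow> h n x = 0))"

lemma equiintegrable_along_lincomb:
  assumes p: "0 < p" and h: "equiintegrable_along p U h" and g: "equiintegrable_along p U g"
  shows "equiintegrable_along p U (\<lambda>n x. a * h n x + b * g n x)"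
proof -
  have mem: "memLp p (h n)" "memLp p (g n)" for n
    using h g unfolding equiintegrable_along_def by auto
  have "\<exists>d>0. \<forall>\<^sub>F n in U. \<forall>A\<in>sets I01. measure I01 A < d \<longrightarrow>
      Lp_integral_on A p (\<lambda>x. a * h n x + b * g n x) < e" if e: "0 < e" for e
  proof -
    define c where "c = 2 powr p * (\<bar>a\<bar> powr p + \<bar>b\<bar> powr p + 1)"
    have c: "0 < c" unfolding c_def by (intro mult_pos_pos add_nonneg_pos) auto
    have gap: "2 powr p * (\<bar>a\<bar> powr p + \<bar>b\<bar> powr p) < c"
      unfolding c_def by (intro mult_strict_left_mono) auto
    obtain d1 d2 where "0 < d1" "0 < d2"
      and ev1: "\<forall>\<^sub>F n in U. \<forall>A\<in>sets I01. measure I01 A < d1 \<longrightarrow> Lp_integral_on A p (h n) < e / c"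
      and ev2: "\<forall>\<^sub>F n in U. \<forall>A\<in>sets I01. measure I01 A < d2 \<longrightarrow> Lp_integral_on A p (g n) < e / c"
      using h g e c unfolding equiintegrable_along_def by (meson divide_pos_pos)
    have "\<forall>\<^sub>F n in U. \<forall>A\<in>sets I01. measure I01 A < min d1 d2 \<longrightarrow>
        Lp_integral_on A p (\<lambda>x. a * h n x + b * g n x) < e"
      using ev1 ev2
    proof eventually_elim
      case (elim n)
      show ?case
      proof (intro ballI impI)
        fix A assume A: "A \<in> sets I01" "measure I01 A < min d1 d2"
        have "Lp_integral_on A p (\<lambda>x. a * h n x + b * g n x)
            \<le> 2 powr p * (\<bar>a\<bar> powr p * Lp_integral_on A p (h n) + \<bar>b\<bar> powr p * Lp_integral_on A p (g n))"
          by (rule Lp_integral_on_lincomb_le[OF p mem A(1)])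
        also have "\<dots> \<le> 2 powr p * (\<bar>a\<bar> powr p * (e / c) + \<bar>b\<bar> powr p * (e / c))"
          using elim A by (intro mult_left_mono add_mono) auto
        also have "\<dots> = e * (2 powr p * (\<bar>a\<bar> powr p + \<bar>b\<bar> powr p)) / c"
          by (simp add: field_simps add_divide_distrib)
        also have "\<dots> < e"
          using mult_strict_left_mono[OF gap e] c by (simp add: divide_less_eq)
        finally show "Lp_integral_on A p (\<lambda>x. a * h n x + b * g n x) < e" .
      qed
    qed
    then show ?thesis using \<open>0 < d1\<close> \<open>0 < d2\<close> by (intro exI[of _ "min d1 d2"]) auto
  qed
  then show ?thesis
    unfolding equiintegrable_along_def using memLp_lincomb[OF p mem(1) mem(2)] by blast
qed

lemma equiintegrable_along_add:
  "0 < p \<Longrightarrow> equiintegrable_along p U h \<Longrightarrow> equiintegrable_along p U g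
    \<Longrightarrow> equiintegrable_along p U (\<lambda>n x. h n x + g n x)"
  using equiintegrable_along_lincomb[of p U h g 1 1] by simp

lemma equiintegrable_along_diff:
  "0 < p \<Longrightarrow> equiintegrable_along p U h \<Longrightarrow> equiintegrable_along p U g
    \<Longrightarrow> equiintegrable_along p U (\<lambda>n x. h n x - g n x)"
  using equiintegrable_along_lincomb[of p U h g 1 "-1"] by simp

lemma equiintegrable_along_uminus:
  "0 < p \<Longrightarrow> equiintegrable_along p U h \<Longrightarrow> equiintegrable_along p U (\<lambda>n x. - h n x)"
  using equiintegrable_along_lincomb[of p U h h "-1" 0] by simp

lemma equiintegrable_along_if_null:
  assumes "\<And>n. memLp p (h n)" and null: "\<And>e. 0 < e \<Longrightarrow> eventually (\<lambda>n. Lp_integral p (h n) < e) U"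
  shows "equiintegrable_along p U h"
  unfolding equiintegrable_along_def
proof (intro conjI allI impI exI[of _ 1])
  fix e :: real assume "0 < e"
  show "\<forall>\<^sub>F n in U. \<forall>A\<in>sets I01. measure I01 A < 1 \<longrightarrow> Lp_integral_on A p (h n) < e"
    using null[OF \<open>0 < e\<close>] by eventually_elim (meson Lp_integral_on_le[OF assms(1)] le_less_trans)
qed (use assms(1) in auto)

lemma equiintegrable_along_up_eq:
  assumes U: "nonprincipal_ultrafilter U" and p: "0 < p" and f: "Lp_bseq p f" and g: "Lp_bseq p g"
    and "up_eq p U f g"
  shows "equiintegrable_along p U (\<lambda>n x. f n x - g n x)"
  using assms
  by (intro equiintegrable_along_if_null memLp_diff Lp_bseqD_memLp up_eq_eventually_Lp_integral_less)

lemma vanishing_support_along_lincomb: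
  assumes h: "vanishing_support_along U h" and g: "vanishing_support_along U g"
  shows "vanishing_support_along U (\<lambda>n x. a * h n x + b * g n x)"
  unfolding vanishing_support_along_def
proof (intro allI impI)
  fix d :: real assume "0 < d"
  then have "\<forall>\<^sub>F n in U. \<exists>A\<in>sets I01. measure I01 A < d/2 \<and> (\<forall>x\<in>space I01. x \<notin> A \<longrightarrow> h n x = 0)"
    "\<forall>\<^sub>F n in U. \<exists>A\<in>sets I01. measure I01 A < d/2 \<and> (\<forall>x\<in>space I01. x \<notin> A \<longrightarrow> g n x = 0)"
    using h g unfolding vanishing_support_along_def by (meson half_gt_zero)+
  then show "\<forall>\<^sub>F n in U. \<exists>A\<in>sets I01. measure I01 A < d \<and>
      (\<forall>x\<in>space I01. x \<notin> A \<longrightarrow> a * h n x + b * g n x = 0)"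
  proof eventually_elim
    case (elim n)
    then obtain A1 A2 where A: "A1 \<in> sets I01" "A2 \<in> sets I01" "measure I01 A1 < d/2" "measure I01 A2 < d/2"
      "\<forall>x\<in>space I01. x \<notin> A1 \<longrightarrow> h n x = 0" "\<forall>x\<in>space I01. x \<notin> A2 \<longrightarrow> g n x = 0" by blast
    have "measure I01 (A1 \<union> A2) \<le> measure I01 A1 + measure I01 A2"
      using A by (intro measure_Un_le) auto
    then show ?case using A by (intro bexI[of _ "A1 \<union> A2"]) auto
  qed
qed

lemma up_norm_eq_0_if_equiintegrable_vanishing_support:
  assumes U: "nonprincipal_ultrafilter U" and p: "0 < p"
    and EI: "equiintegrable_along p U h" and SS: "vanishing_support_along U h"
  shows "up_norm p U h = 0"
proof (rule up_norm_eq_0I[OF U p])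
  fix e :: real assume "0 < e"
  then obtain d where "0 < d"
    and small: "\<forall>\<^sub>F n in U. \<forall>A\<in>sets I01. measure I01 A < d \<longrightarrow> Lp_integral_on A p (h n) < e"
    using EI unfolding equiintegrable_along_def by blast
  have supp: "\<forall>\<^sub>F n in U. \<exists>A\<in>sets I01. measure I01 A < d \<and> (\<forall>x\<in>space I01. x \<notin> A \<longrightarrow> h n x = 0)"
    using SS \<open>0 < d\<close> unfolding vanishing_support_along_def by blast
  from small supp show "\<forall>\<^sub>F n in U. Lp_integral p (h n) < e"
  proof eventually_elim
    case (elim n)
    then obtain A where "A \<in> sets I01" "measure I01 A < d" "\<forall>x\<in>space I01. x \<notin> A \<longrightarrow> h n x = 0"
      by blast
    then show ?case using elim Lp_integral_on_eq[of A "h n" p] by auto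
  qed
qed

lemma up_eq_if_vanishing_support:
  assumes U: "nonprincipal_ultrafilter U" and p: "0 < p"
    and "vanishing_support_along U u" "vanishing_support_along U v"
    and "equiintegrable_along p U (\<lambda>n x. u n x - v n x)"
  shows "up_eq p U u v"
  unfolding up_eq_def
  using vanishing_support_along_lincomb[OF assms(3,4), of 1 "-1"] assms(5)
  by (intro up_norm_eq_0_if_equiintegrable_vanishing_support[OF U p]) auto

section \<open>The singular part\<close>

lemma Lp_bseq_trunc_above:
  assumes p: "0 < p" and f: "Lp_bseq p f"
  shows "Lp_bseq p (\<lambda>n. trunc_above r (f n))"
  by (rule Lp_bseq_dominated[OF p f])
    (use Lp_bseqD_memLp[OF f] p in \<open>auto intro: memLp_trunc_above Lp_integral_trunc_above_le\<close>)

lemma indicator_abs_below_level_powr_le: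
  assumes "0 < p" "r \<le> k"
  shows "indicator A x * \<bar>g x - trunc_above k g x\<bar> powr p
    \<le> r powr p * indicator A x + (\<bar>trunc_above r g x\<bar> powr p - \<bar>trunc_above k g x\<bar> powr p)"
proof -
  consider "k < \<bar>g x\<bar>" | "r < \<bar>g x\<bar>" "\<bar>g x\<bar> \<le> k" | "\<bar>g x\<bar> \<le> r" by linarith
  then show ?thesis
  proof cases
    case 3
    then have "\<bar>g x\<bar> powr p \<le> r powr p" using assms by (intro powr_mono2) auto
    then show ?thesis using 3 assms by (simp add: trunc_above_def indicator_def)
  qed (use assms in \<open>auto simp: trunc_above_def indicator_def\<close>)
qed

lemma Lp_integral_on_below_level_le:
  assumes g: "memLp p g" and p: "0 < p" and "r \<le> k" and A: "A \<in> sets I01"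
  shows "Lp_integral_on A p (\<lambda>x. g x - trunc_above k g x)
    \<le> r powr p * measure I01 A + (Lp_integral p (trunc_above r g) - Lp_integral p (trunc_above k g))"
proof -
  have tr: "integrable I01 (\<lambda>x. \<bar>trunc_above t g x\<bar> powr p)" for t
    using memLp_trunc_above[OF g p] by (auto simp: memLp_def)
  have "Lp_integral_on A p (\<lambda>x. g x - trunc_above k g x) \<le> integral\<^sup>L I01 (\<lambda>x.
      r powr p * indicator A x + (\<bar>trunc_above r g x\<bar> powr p - \<bar>trunc_above k g x\<bar> powr p))"
    unfolding Lp_integral_on_def
  proof (rule integral_mono)
    show "integrable I01 (\<lambda>x. indicator A x * \<bar>g x - trunc_above k g x\<bar> powr p)"
      by (intro integrable_Lp_integral_on memLp_diff memLp_trunc_above g p A)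
    show "integrable I01 (\<lambda>x. r powr p * indicator A x
        + (\<bar>trunc_above r g x\<bar> powr p - \<bar>trunc_above k g x\<bar> powr p))"
      using integrable_indicator_I01[OF A] tr by auto
  qed (rule indicator_abs_below_level_powr_le[OF p \<open>r \<le> k\<close>])
  also have "\<dots> = r powr p * measure I01 A + (Lp_integral p (trunc_above r g) - Lp_integral p (trunc_above k g))"
  proof -
    have "A \<inter> space I01 = A" using sets.sets_into_space[OF A] by auto
    then show ?thesis
      unfolding Lp_integral_def using integrable_indicator_I01[OF A] tr by simp
  qed
  finally show ?thesis .
qed

definition tail_integral :: "real \<Rightarrow> (nat \<Rightarrow> real \<Rightarrow> real) \<Rightarrow> nat \<Rightarrow> real \<Rightarrow> real" where
  "tail_integral p f n s = Lp_integral p (trunc_above s (f n))"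

definition tail_limit :: "real \<Rightarrow> nat filter \<Rightarrow> (nat \<Rightarrow> real \<Rightarrow> real) \<Rightarrow> real \<Rightarrow> real" where
  "tail_limit p U f s = Lim U (\<lambda>n. tail_integral p f n s)"

definition tail_inf :: "real \<Rightarrow> nat filter \<Rightarrow> (nat \<Rightarrow> real \<Rightarrow> real) \<Rightarrow> real" where
  "tail_inf p U f = Inf (range (tail_limit p U f))"

definition trunc_level :: "real \<Rightarrow> nat filter \<Rightarrow> (nat \<Rightarrow> real \<Rightarrow> real) \<Rightarrow> nat \<Rightarrow> nat" where
  "trunc_level p U f n =
     Max ({0} \<union> {k. 1 \<le> k \<and> k \<le> n \<and> tail_inf p U f - 1 / real k < tail_integral p f n (real k)})"

definition singular_part :: "real \<Rightarrow> nat filter \<Rightarrow> (nat \<Rightarrow> real \<Rightarrow> real) \<Rightarrow> nat \<Rightarrow> real \<Rightarrow> real" where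
  "singular_part p U f n = trunc_above (real (trunc_level p U f n)) (f n)"

context
  fixes p :: real and U :: "nat filter" and f :: "nat \<Rightarrow> real \<Rightarrow> real"
  assumes p: "0 < p" and U: "nonprincipal_ultrafilter U" and f: "Lp_bseq p f"
begin

lemma tail_integral_antimono: "s \<le> t \<Longrightarrow> tail_integral p f n t \<le> tail_integral p f n s"
  unfolding tail_integral_def
  by (rule Lp_integral_dominated[OF memLp_trunc_above[OF Lp_bseqD_memLp[OF f] p] measurable_trunc_above p])
    (use Lp_bseqD_memLp[OF f] in \<open>auto simp: memLp_def trunc_above_def\<close>)

lemma tail_integral_tendsto: "((\<lambda>n. tail_integral p f n s) \<longlongrightarrow> tail_limit p U f s) U"
proof -
  obtain M where M: "\<And>n. Lp_integral p (f n) \<le> M" using Lp_bseq_Lp_integral_bound[OF p f] by blast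
  have "\<bar>tail_integral p f n s\<bar> \<le> M" for n
    using Lp_integral_trunc_above_le[OF Lp_bseqD_memLp[OF f] p, of s n] M[of n]
    unfolding tail_integral_def by (simp add: Lp_integral_nonneg)
  then show ?thesis unfolding tail_limit_def by (rule nonprincipal_ultrafilter_tendsto_Lim[OF U])
qed

lemma tail_limit_antimono: "s \<le> t \<Longrightarrow> tail_limit p U f t \<le> tail_limit p U f s"
  by (rule tendsto_le[OF nonprincipal_ultrafilter_neq_bot[OF U] tail_integral_tendsto tail_integral_tendsto])
    (simp add: tail_integral_antimono)

lemma tail_inf_le: "tail_inf p U f \<le> tail_limit p U f s"
proof -
  have "0 \<le> tail_limit p U f t" for t
    by (rule tendsto_lowerbound[OF tail_integral_tendsto _ nonprincipal_ultrafilter_neq_bot[OF U]])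
      (simp add: tail_integral_def Lp_integral_nonneg)
  then show ?thesis unfolding tail_inf_def by (intro cInf_lower bdd_belowI2) auto
qed

lemma trunc_level_spec:
  assumes "1 \<le> trunc_level p U f n"
  shows "tail_inf p U f - 1 / real (trunc_level p U f n) < tail_integral p f n (real (trunc_level p U f n))"
proof -
  let ?S = "{0} \<union> {k. 1 \<le> k \<and> k \<le> n \<and> tail_inf p U f - 1 / real k < tail_integral p f n (real k)}"
  have "finite ?S" by (rule finite_subset[of _ "{..n}"]) auto
  then have "trunc_level p U f n \<in> ?S" unfolding trunc_level_def by (intro Max_in) auto
  then show ?thesis using assms by auto
qed

lemma eventually_trunc_level_ge:
  assumes K: "1 \<le> K"
  shows "\<forall>\<^sub>F n in U. K \<le> trunc_level p U f n"
proof -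
  have "0 < 1 / real K" using K by simp
  then have "tail_inf p U f - 1 / real K < tail_limit p U f (real K)"
    using tail_inf_le[of "real K"] by linarith
  then have "\<forall>\<^sub>F n in U. tail_inf p U f - 1 / real K < tail_integral p f n (real K)"
    using tail_integral_tendsto order_tendstoD(1) by blast
  then show ?thesis using nonprincipal_ultrafilter_eventually_ge[OF U, of K]
  proof eventually_elim
    case (elim n)
    let ?S = "{0} \<union> {k. 1 \<le> k \<and> k \<le> n \<and> tail_inf p U f - 1 / real k < tail_integral p f n (real k)}"
    have "finite ?S" by (rule finite_subset[of _ "{..n}"]) auto
    moreover have "K \<in> ?S" using elim K by auto
    ultimately show ?case unfolding trunc_level_def by (rule Max_ge)
  qed
qed

lemma eventually_tail_gap_less:
  assumes e: "0 < e"
  shows "\<forall>\<^sub>F r in at_top. \<forall>\<^sub>F n in U. r \<le> real (trunc_level p U f n) \<and>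
    tail_integral p f n r - tail_integral p f n (real (trunc_level p U f n)) < e"
proof -
  obtain s0 where s0: "tail_limit p U f s0 < tail_inf p U f + e/3"
    using cInf_lessD[of "range (tail_limit p U f)" "tail_inf p U f + e/3"] e
    unfolding tail_inf_def by auto
  show ?thesis
    using eventually_ge_at_top[of "max 1 (max s0 (3/e))"]
  proof eventually_elim
    case (elim r)
    define K where "K = nat \<lceil>r\<rceil>"
    have "1 \<le> K" "r \<le> real K" unfolding K_def using elim by (auto simp: le_nat_iff)
    have "1 / real K \<le> 1 / r" using \<open>r \<le> real K\<close> elim by (intro divide_left_mono) auto
    also have "1 / r \<le> e / 3" using elim e by (simp add: field_simps)
    finally have K_small: "1 / real K \<le> e / 3" .
    have "tail_limit p U f r < tail_inf p U f + e/3" using tail_limit_antimono[of s0 r] s0 elim by simp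
    then have "\<forall>\<^sub>F n in U. tail_integral p f n r < tail_inf p U f + e/3"
      using tail_integral_tendsto order_tendstoD(2) by blast
    with eventually_trunc_level_ge[OF \<open>1 \<le> K\<close>] show ?case
    proof eventually_elim
      case (elim n)
      have "1 / real (trunc_level p U f n) \<le> 1 / real K"
        using elim \<open>1 \<le> K\<close> by (intro divide_left_mono) auto
      then have "tail_inf p U f - e/3 < tail_integral p f n (real (trunc_level p U f n))"
        using trunc_level_spec[of n] elim \<open>1 \<le> K\<close> K_small by simp
      moreover have "r \<le> real (trunc_level p U f n)" using \<open>r \<le> real K\<close> elim by linarith
      ultimately show ?case using elim e by auto
    qed
  qed
qed

lemma memLp_singular_part: "memLp p (singular_part p U f n)"
  unfolding singular_part_def by (rule memLp_trunc_above[OF Lp_bseqD_memLp[OF f] p])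

lemma Lp_integral_singular_part_le: "Lp_integral p (singular_part p U f n) \<le> Lp_integral p (f n)"
  unfolding singular_part_def by (rule Lp_integral_trunc_above_le[OF Lp_bseqD_memLp[OF f] p])

lemma Lp_bseq_singular_part: "Lp_bseq p (singular_part p U f)"
  by (rule Lp_bseq_dominated[OF p f memLp_singular_part Lp_integral_singular_part_le])

lemma tendsto_up_norm_trunc_above_minus_singular_part:
  "((\<lambda>r. up_norm p U (\<lambda>n x. trunc_above r (f n) x - singular_part p U f n x)) \<longlongrightarrow> 0) at_top"
proof (rule order_tendstoI)
  fix a :: real assume "0 < a"
  then have "\<forall>\<^sub>F r in at_top. \<forall>\<^sub>F n in U. r \<le> real (trunc_level p U f n) \<and>
      tail_integral p f n r - tail_integral p f n (real (trunc_level p U f n)) < (a/2) powr p"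
    by (intro eventually_tail_gap_less) simp
  then show "\<forall>\<^sub>F r in at_top. up_norm p U (\<lambda>n x. trunc_above r (f n) x - singular_part p U f n x) < a"
  proof eventually_elim
    case (elim r)
    have "up_norm p U (\<lambda>n x. trunc_above r (f n) x - singular_part p U f n x) \<le> a/2"
      using elim
    proof (intro up_norm_le[OF U Lp_bseq_diff[OF p Lp_bseq_trunc_above[OF p f] Lp_bseq_singular_part]],
        eventually_elim)
      case (elim n)
      then have "Lp_integral p (\<lambda>x. trunc_above r (f n) x - singular_part p U f n x) < (a/2) powr p"
        using Lp_integral_trunc_above_diff[OF Lp_bseqD_memLp[OF f] p, of r "real (trunc_level p U f n)" n]
        by (simp add: tail_integral_def singular_part_def)
      then show ?case using \<open>0 < a\<close> by (subst Lp_norm_le_iff[OF p]) auto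
    qed
    then show ?case using \<open>0 < a\<close> by simp
  qed
next
  fix a :: real assume "a < 0"
  then show "\<forall>\<^sub>F r in at_top. a < up_norm p U (\<lambda>n x. trunc_above r (f n) x - singular_part p U f n x)"
    using up_norm_nonneg[OF U Lp_bseq_diff[OF p Lp_bseq_trunc_above[OF p f] Lp_bseq_singular_part]]
    by (intro always_eventually allI) (meson less_le_trans)
qed

lemma vanishing_support_singular_part: "vanishing_support_along U (singular_part p U f)"
  unfolding vanishing_support_along_def
proof (intro allI impI)
  fix d :: real assume "0 < d"
  obtain M where M: "\<And>n. Lp_integral p (f n) \<le> M" using Lp_bseq_Lp_integral_bound[OF p f] by blast
  have "((\<lambda>K. real K powr -p) \<longlongrightarrow> 0) sequentially"
    using p by (intro tendsto_neg_powr filterlim_real_sequentially) simp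
  then have "((\<lambda>K. M * real K powr -p) \<longlongrightarrow> 0) sequentially"
    by (rule tendsto_mult_right_zero)
  then have "\<forall>\<^sub>F K in sequentially. M * real K powr -p < d"
    using \<open>0 < d\<close> by (rule order_tendstoD(2))
  then have "\<forall>\<^sub>F K in sequentially. 1 \<le> K \<and> M * real K powr -p < d"
    by (intro eventually_conj eventually_ge_at_top)
  then obtain K where K: "1 \<le> K" "M * real K powr -p < d"
    using eventually_happens'[OF sequentially_bot] by blast
  show "\<forall>\<^sub>F n in U. \<exists>A\<in>sets I01. measure I01 A < d \<and>
      (\<forall>x\<in>space I01. x \<notin> A \<longrightarrow> singular_part p U f n x = 0)"
    using eventually_trunc_level_ge[OF \<open>1 \<le> K\<close>]
  proof eventually_elim
    case (elim n)
    let ?A = "{x\<in>space I01. real K < \<bar>f n x\<bar>}"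
    have K0: "0 < real K" using K by simp
    have "measure I01 ?A \<le> Lp_integral p (f n) / real K powr p"
      by (rule measure_level_set_le[OF Lp_bseqD_memLp[OF f] K0 p])
    also have "\<dots> \<le> M / real K powr p"
      using K0 by (intro divide_right_mono M) simp
    also have "\<dots> = M * real K powr -p"
      by (simp add: powr_minus_divide)
    finally have "measure I01 ?A < d" using K by simp
    moreover have "?A \<in> sets I01" by (rule sets_level_set[OF Lp_bseqD_memLp[OF f] K0 p])
    moreover have "\<forall>x\<in>space I01. x \<notin> ?A \<longrightarrow> singular_part p U f n x = 0"
      using elim by (auto simp: singular_part_def trunc_above_def)
    ultimately show ?case by blast
  qed
qed

lemma equiintegrable_regular_part: "equiintegrable_along p U (\<lambda>n x. f n x - singular_part p U f n x)"
  unfolding equiintegrable_along_def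
proof (intro conjI allI impI)
  show "memLp p (\<lambda>x. f n x - singular_part p U f n x)" for n
    by (rule memLp_diff[OF p Lp_bseqD_memLp[OF f] memLp_singular_part])
  fix e :: real assume "0 < e"
  then have "\<forall>\<^sub>F r in at_top. 1 \<le> r \<and> (\<forall>\<^sub>F n in U. r \<le> real (trunc_level p U f n) \<and>
      tail_integral p f n r - tail_integral p f n (real (trunc_level p U f n)) < e/2)"
    by (intro eventually_conj eventually_ge_at_top eventually_tail_gap_less) simp
  then obtain r where "1 \<le> r" and gap: "\<forall>\<^sub>F n in U. r \<le> real (trunc_level p U f n) \<and>
      tail_integral p f n r - tail_integral p f n (real (trunc_level p U f n)) < e/2"
    using eventually_happens'[OF trivial_limit_at_top_linorder] by blast
  have rp: "0 < r powr p" using \<open>1 \<le> r\<close> by simp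
  have "\<forall>\<^sub>F n in U. \<forall>A\<in>sets I01. measure I01 A < e / (2 * r powr p) \<longrightarrow>
      Lp_integral_on A p (\<lambda>x. f n x - singular_part p U f n x) < e"
    using gap
  proof eventually_elim
    case (elim n)
    show ?case
    proof (intro ballI impI)
      fix A assume A: "A \<in> sets I01" "measure I01 A < e / (2 * r powr p)"
      have "Lp_integral_on A p (\<lambda>x. f n x - singular_part p U f n x)
          \<le> r powr p * measure I01 A + (tail_integral p f n r - tail_integral p f n (real (trunc_level p U f n)))"
        using Lp_integral_on_below_level_le[OF Lp_bseqD_memLp[OF f] p _ A(1)] elim
        by (simp add: singular_part_def tail_integral_def)
      also have "\<dots> < r powr p * (e / (2 * r powr p)) + e/2"
        using elim A rp by (intro add_less_le_mono mult_strict_left_mono) auto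
      also have "\<dots> = e" using rp by simp
      finally show "Lp_integral_on A p (\<lambda>x. f n x - singular_part p U f n x) < e" .
    qed
  qed
  then show "\<exists>d>0. \<forall>\<^sub>F n in U. \<forall>A\<in>sets I01. measure I01 A < d \<longrightarrow>
      Lp_integral_on A p (\<lambda>x. f n x - singular_part p U f n x) < e"
    using \<open>0 < e\<close> rp by (intro exI[of _ "e / (2 * r powr p)"]) auto
qed

end

lemma up_eq_singular_part_cong:
  assumes U: "nonprincipal_ultrafilter U" and p: "0 < p" and f: "Lp_bseq p f" and g: "Lp_bseq p g"
    and "up_eq p U f g"
  shows "up_eq p U (singular_part p U f) (singular_part p U g)"
proof (rule up_eq_if_vanishing_support[OF U p])
  have "equiintegrable_along p U (\<lambda>n x. (f n x - g n x) - (f n x - singular_part p U f n x)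
      + (g n x - singular_part p U g n x))"
    using assms
    by (intro equiintegrable_along_add equiintegrable_along_diff equiintegrable_along_up_eq
        equiintegrable_regular_part)
  then show "equiintegrable_along p U (\<lambda>n x. singular_part p U f n x - singular_part p U g n x)"
    by simp
qed (intro vanishing_support_singular_part U p f g)+

lemma up_eq_singular_part_lincomb:
  assumes U: "nonprincipal_ultrafilter U" and p: "0 < p" and f: "Lp_bseq p f" and g: "Lp_bseq p g"
  shows "up_eq p U (singular_part p U (\<lambda>n x. a * f n x + b * g n x))
    (\<lambda>n x. a * singular_part p U f n x + b * singular_part p U g n x)"
proof (rule up_eq_if_vanishing_support[OF U p])
  let ?h = "\<lambda>n x. a * f n x + b * g n x"
  have h: "Lp_bseq p ?h" by (rule Lp_bseq_lincomb[OF p f g])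
  have "equiintegrable_along p U (\<lambda>n x. (a * (f n x - singular_part p U f n x)
      + b * (g n x - singular_part p U g n x)) - (?h n x - singular_part p U ?h n x))"
    using U p f g h
    by (intro equiintegrable_along_diff equiintegrable_along_lincomb equiintegrable_regular_part)
  then show "equiintegrable_along p U (\<lambda>n x. singular_part p U ?h n x
      - (a * singular_part p U f n x + b * singular_part p U g n x))"
    by (simp add: algebra_simps)
  show "vanishing_support_along U (singular_part p U ?h)"
    by (rule vanishing_support_singular_part[OF p U h])
  show "vanishing_support_along U (\<lambda>n x. a * singular_part p U f n x + b * singular_part p U g n x)"
    by (intro vanishing_support_along_lincomb vanishing_support_singular_part U p f g)
qed

lemma up_eq_singular_part_idem:
  assumes U: "nonprincipal_ultrafilter U" and p: "0 < p" and f: "Lp_bseq p f"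
  shows "up_eq p U (singular_part p U (singular_part p U f)) (singular_part p U f)"
proof (rule up_eq_if_vanishing_support[OF U p])
  have Rf: "Lp_bseq p (singular_part p U f)" by (rule Lp_bseq_singular_part[OF p U f])
  have "equiintegrable_along p U
      (\<lambda>n x. - (singular_part p U f n x - singular_part p U (singular_part p U f) n x))"
    by (intro equiintegrable_along_uminus equiintegrable_regular_part U p Rf)
  then show "equiintegrable_along p U
      (\<lambda>n x. singular_part p U (singular_part p U f) n x - singular_part p U f n x)"
    by simp
qed (intro vanishing_support_singular_part U p f Lp_bseq_singular_part)+

lemma up_norm_singular_part_le:
  assumes U: "nonprincipal_ultrafilter U" and p: "0 < p" and f: "Lp_bseq p f"
  shows "up_norm p U (singular_part p U f) \<le> up_norm p U f"
proof (rule up_norm_mono[OF U Lp_bseq_singular_part[OF p U f] f])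
  show "Lp_norm p (singular_part p U f n) \<le> Lp_norm p (f n)" for n
    unfolding Lp_norm_eq_Lp_integral_powr
    using Lp_integral_singular_part_le[OF p U f] p by (intro powr_mono2) (auto simp: Lp_integral_nonneg)
qed

theorem lemma2p3:
  fixes p :: real and U :: "nat filter"
  assumes "1 < p" and "nonprincipal_ultrafilter U"
  shows "\<exists>R :: (nat \<Rightarrow> real \<Rightarrow> real) \<Rightarrow> (nat \<Rightarrow> real \<Rightarrow> real).
     (\<forall>f. Lp_bseq p f \<longrightarrow> Lp_bseq p (R f) \<and>
        ((\<lambda>r. up_norm p U (\<lambda>n x. trunc_above r (f n) x - R f n x)) \<longlongrightarrow> 0) at_top) \<and>
     (\<forall>f g. Lp_bseq p f \<longrightarrow> Lp_bseq p g \<longrightarrow> up_eq p U f g \<longrightarrow> up_eq p U (R f) (R g)) \<and>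
     (\<forall>f g a b. Lp_bseq p f \<longrightarrow> Lp_bseq p g \<longrightarrow>
        up_eq p U (R (\<lambda>n x. a * f n x + b * g n x)) (\<lambda>n x. a * R f n x + b * R g n x)) \<and>
     (\<exists>C. \<forall>f. Lp_bseq p f \<longrightarrow> up_norm p U (R f) \<le> C * up_norm p U f) \<and>
     (\<forall>f. Lp_bseq p f \<longrightarrow> up_eq p U (R (R f)) (R f))"
proof -
  have p: "0 < p" using \<open>1 < p\<close> by simp
  note U = \<open>nonprincipal_ultrafilter U\<close>
  show ?thesis
  proof (intro exI[of _ "singular_part p U"] conjI allI impI exI[of _ 1])
    fix f assume f: "Lp_bseq p f"
    show "Lp_bseq p (singular_part p U f)" by (rule Lp_bseq_singular_part[OF p U f])
    show "((\<lambda>r. up_norm p U (\<lambda>n x. trunc_above r (f n) x - singular_part p U f n x)) \<longlongrightarrow> 0) at_top"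
      by (rule tendsto_up_norm_trunc_above_minus_singular_part[OF p U f])
    show "up_norm p U (singular_part p U f) \<le> 1 * up_norm p U f"
      using up_norm_singular_part_le[OF U p f] by simp
    show "up_eq p U (singular_part p U (singular_part p U f)) (singular_part p U f)"
      by (rule up_eq_singular_part_idem[OF U p f])
  next
    fix f g assume "Lp_bseq p f" "Lp_bseq p g"
    then show "up_eq p U f g \<Longrightarrow> up_eq p U (singular_part p U f) (singular_part p U g)"
      and "up_eq p U (singular_part p U (\<lambda>n x. a * f n x + b * g n x))
        (\<lambda>n x. a * singular_part p U f n x + b * singular_part p U g n x)" for a b
      using up_eq_singular_part_cong[OF U p] up_eq_singular_part_lincomb[OF U p] by blast+
  qed
qed

end
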